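(* (a) For every sequence $C=(C(n):n\in\omega)$ of finite sets and every infinite $Y\subseteq\omega$, there is an infinite $X\subseteq Y$ such that $C$ admits a nice dissection over $X$. (b) Let $K$ be a compactification of a discrete space $D$, and let $D\subseteq X\subseteq K$ be such that every sequence of pairwise disjoint finite nonempty subsets of $D$ has an accumulation point in $\operatorname{CL}(X)$. Then $\operatorname{CL}(X)$ is pseudocompact.
   Context: Given a sequence $C=(C(n):n\in\omega)$ of finite sets and an infinite $X\subseteq\omega$, a nice dissection of $C$ over $X$ is a pair $(U,D)$ of sequences of sets indexed by $\omega$ such that $(U(n):n\in X)$ is increasing (i.e. $U(n)\subseteq U(m)$ for $n<m$ in $X$), the sets $D(n)$, $n\in X$, are pairwise disjoint, and for every $n\in X$, $U(n)\cap D(n)=\emptyset$ and $C(n)=U(n)\cup D(n)$. $\operatorname{CL}(X)$ is the set of nonempty closed subsets of $X$ with the Vietoris topology (generated by $A^+=\{F:F\subseteq A\}$, $A^-=\{F:F\cap A\ne\emptyset\}$, $A$ open); finite nonempty subsets of $D$ are regarded as points of $\operatorname{CL}(X)$. Pseudocompact means every continuous real-valued function is bounded. *)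

theory Defs
  imports "HOL-Analysis.Analysis"
begin

definition nice_dissection :: "(nat \<Rightarrow> 'a set) \<Rightarrow> nat set \<Rightarrow> (nat \<Rightarrow> 'a set) \<Rightarrow> (nat \<Rightarrow> 'a set) \<Rightarrow> bool" where
  "nice_dissection C X U D \<longleftrightarrow>
     (\<forall>n\<in>X. \<forall>m\<in>X. n < m \<longrightarrow> U n \<subseteq> U m) \<and>
     (\<forall>n\<in>X. \<forall>m\<in>X. n \<noteq> m \<longrightarrow> D n \<inter> D m = {}) \<and>
     (\<forall>n\<in>X. U n \<inter> D n = {} \<and> C n = U n \<union> D n)"

definition CL :: "'a topology \<Rightarrow> 'a set set" where
  "CL T = {F. F \<noteq> {} \<and> closedin T F}"

definition vupper :: "'a topology \<Rightarrow> 'a set \<Rightarrow> 'a set set" where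
  "vupper T A = {F \<in> CL T. F \<subseteq> A}"

definition vlower :: "'a topology \<Rightarrow> 'a set \<Rightarrow> 'a set set" where
  "vlower T A = {F \<in> CL T. F \<inter> A \<noteq> {}}"

definition vietoris :: "'a topology \<Rightarrow> 'a set topology" where
  "vietoris T = topology_generated_by
     ({vupper T A | A. openin T A} \<union> {vlower T A | A. openin T A})"

definition pseudocompact :: "'a topology \<Rightarrow> bool" where
  "pseudocompact T \<longleftrightarrow>
     (\<forall>f. continuous_map T euclideanreal f \<longrightarrow> bounded (f ` topspace T))"

definition seq_accumulation_point :: "'a topology \<Rightarrow> (nat \<Rightarrow> 'a) \<Rightarrow> 'a \<Rightarrow> bool" where
  "seq_accumulation_point T s p \<longleftrightarrow>
     p \<in> topspace T \<and> (\<forall>U. openin T U \<and> p \<in> U \<longrightarrow> infinite {n. s n \<in> U})"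

definition compactification_of_discrete :: "'a topology \<Rightarrow> 'a set \<Rightarrow> bool" where
  "compactification_of_discrete K D \<longleftrightarrow>
     compact_space K \<and> Hausdorff_space K \<and> D \<subseteq> topspace K \<and>
     K closure_of D = topspace K \<and> subtopology K D = discrete_topology D"

end

(*
  (a) is a diagonal argument: refining an infinite index set so that the membership of each
  point of C(n) becomes constant along it, one obtains X on which every point of C(n) either
  lies in C(m) for all larger m in X (it goes into U(n)) or for none of them (it goes into D(n)).

  (b) Finite subsets of D are dense in CL(X) and, X being T1, are points of it, so by the usual
  argument an unbounded continuous function would yield a sequence of such finite sets without
  accumulation point. Given such a sequence E, take a nice dissection E(n) = U(n) \<union> D(n) along a
  subsequence on which the D(n) are all empty or all nonempty. The increasing U(n) converge to
  the closure of their union; in the second case the disjoint D(n) have an accumulation point F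
  by hypothesis, and then F \<union> cl(\<Union> U(n)) is an accumulation point of E.
*)
theory Submission
  imports Defs
begin

lemma infinite_subset_uniform_membership:
  fixes C :: "'i \<Rightarrow> 'b set"
  assumes "finite F" "infinite Z"
  shows "\<exists>Z'\<subseteq>Z. infinite Z' \<and> (\<forall>x\<in>F. \<forall>m\<in>Z'. \<forall>m'\<in>Z'. x \<in> C m \<longleftrightarrow> x \<in> C m')"
  using assms(1)
proof (induction F rule: finite_induct)
  case empty
  then show ?case using assms(2) by blast
next
  case (insert x F)
  then obtain Z' where Z': "Z' \<subseteq> Z" "infinite Z'"
    "\<forall>y\<in>F. \<forall>m\<in>Z'. \<forall>m'\<in>Z'. y \<in> C m \<longleftrightarrow> y \<in> C m'"
    by blast
  have "finite ((\<lambda>m. x \<in> C m) ` Z')"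
    by (rule finite_subset[of _ UNIV]) auto
  then obtain m\<^sub>0 where "infinite {m\<in>Z'. x \<in> C m \<longleftrightarrow> x \<in> C m\<^sub>0}"
    using pigeonhole_infinite[OF Z'(2)] by blast
  with Z' show ?case
    by (intro exI[of _ "{m\<in>Z'. x \<in> C m \<longleftrightarrow> x \<in> C m\<^sub>0}"]) auto
qed

lemma infinite_diagonal_subset:
  fixes Q :: "nat \<Rightarrow> nat set \<Rightarrow> bool"
  assumes refine: "\<And>n Z. infinite Z \<Longrightarrow> \<exists>Z'\<subseteq>Z. infinite Z' \<and> Q n Z'"
    and antimono: "\<And>n Z Z'. Q n Z \<Longrightarrow> Z' \<subseteq> Z \<Longrightarrow> Q n Z'"
    and "infinite Y"
  shows "\<exists>X\<subseteq>Y. infinite X \<and> (\<forall>n\<in>X. Q n {m\<in>X. n < m})"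
proof -
  obtain step where step: "\<And>Z. infinite Z \<Longrightarrow>
      step Z \<subseteq> Z - {LEAST n. n \<in> Z} \<and> infinite (step Z) \<and> Q (LEAST n. n \<in> Z) (step Z)"
  proof -
    have "\<exists>Z'. infinite Z \<longrightarrow> Z' \<subseteq> Z - {LEAST n. n \<in> Z} \<and> infinite Z' \<and> Q (LEAST n. n \<in> Z) Z'"
      for Z :: "nat set"
      using refine[of "Z - {LEAST n. n \<in> Z}"] by auto
    then show thesis using that by metis
  qed
  \<comment> \<open>Fusion: \<open>a k\<close> is the least element of \<open>Zs k\<close>, and all later \<open>a j\<close> lie in
    \<open>Zs (Suc k)\<close>, where \<open>Q (a k)\<close> holds.\<close>
  define Zs where "Zs k = (step ^^ k) Y" for k
  define a where "a k = (LEAST n. n \<in> Zs k)" for k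
  have Zs_infinite: "infinite (Zs k)" for k
    by (induction k) (simp_all add: Zs_def assms(3) step)
  have Zs_step: "Zs (Suc k) \<subseteq> Zs k - {a k}" "Q (a k) (Zs (Suc k))" for k
    using step[OF Zs_infinite[of k]] by (simp_all add: Zs_def a_def)
  have Zs_antimono: "Zs j \<subseteq> Zs k" if "k \<le> j" for j k
    using that by (induction j rule: dec_induct) (use Zs_step in blast)+
  have a_in: "a k \<in> Zs k" for k
    unfolding a_def using Zs_infinite[of k] by (metis LeastI finite.emptyI ex_in_conv)
  have a_later: "a j \<in> Zs (Suc k)" if "k < j" for j k
    using Zs_antimono[of "Suc k" j] that a_in[of j] by auto
  have "strict_mono a"
  proof (rule strict_monoI)
    fix k j :: nat
    assume "k < j"
    then have "a j \<in> Zs k" "a j \<noteq> a k"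
      using a_later Zs_step(1)[of k] by auto
    moreover have "a k \<le> a j"
      unfolding a_def[of k] using \<open>a j \<in> Zs k\<close> by (rule Least_le)
    ultimately show "a k < a j" by simp
  qed
  show ?thesis
  proof (intro exI[of _ "range a"] conjI ballI)
    show "range a \<subseteq> Y"
      using a_in Zs_antimono[of 0] by (auto simp: Zs_def)
    show "infinite (range a)"
      using \<open>strict_mono a\<close> strict_mono_imp_inj_on range_inj_infinite by blast
  next
    fix n assume "n \<in> range a"
    then obtain k where k: "n = a k" by blast
    have "{m \<in> range a. n < m} \<subseteq> Zs (Suc k)"
      using a_later \<open>strict_mono a\<close> k by (auto simp: strict_mono_less)
    then show "Q n {m \<in> range a. n < m}"
      using antimono Zs_step(2) k by blast
  qed
qed

lemma nice_dissection_if_eventually_constant: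
  assumes stable: "\<And>n x m m'. n \<in> X \<Longrightarrow> x \<in> C n \<Longrightarrow> m \<in> X \<Longrightarrow> m' \<in> X \<Longrightarrow>
      n < m \<Longrightarrow> n < m' \<Longrightarrow> x \<in> C m \<longleftrightarrow> x \<in> C m'"
  shows "nice_dissection C X (\<lambda>n. {x \<in> C n. \<forall>m\<in>X. n < m \<longrightarrow> x \<in> C m})
                              (\<lambda>n. {x \<in> C n. \<exists>m\<in>X. n < m \<and> x \<notin> C m})"
proof -
  have "{x \<in> C n. \<exists>m\<in>X. n < m \<and> x \<notin> C m} \<inter> {x \<in> C m. \<exists>m'\<in>X. m < m' \<and> x \<notin> C m'} = {}"
    if "n \<in> X" "m \<in> X" "n \<noteq> m" for n m
  proof (cases "n < m")
    case True
    then show ?thesis using stable that by blast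
  next
    case False
    then have "m < n" using that(3) by simp
    then show ?thesis using stable that by blast
  qed
  then show ?thesis
    unfolding nice_dissection_def by (intro conjI ballI impI) auto
qed

lemma exists_nice_dissection:
  fixes C :: "nat \<Rightarrow> 'b set"
  assumes "\<forall>n. finite (C n)" "infinite Y"
  shows "\<exists>X\<subseteq>Y. infinite X \<and> (\<exists>U D. nice_dissection C X U D)"
proof -
  define Q where "Q n Z \<longleftrightarrow> (\<forall>x\<in>C n. \<forall>m\<in>Z. \<forall>m'\<in>Z. x \<in> C m \<longleftrightarrow> x \<in> C m')" for n Z
  have refine: "\<exists>Z'\<subseteq>Z. infinite Z' \<and> Q n Z'" if "infinite Z" for n Z
    unfolding Q_def using assms(1)[rule_format, of n] that by (rule infinite_subset_uniform_membership)
  have antimono: "Q n Z'" if "Q n Z" "Z' \<subseteq> Z" for n Z Z'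
    using that unfolding Q_def by blast
  have "\<exists>X\<subseteq>Y. infinite X \<and> (\<forall>n\<in>X. Q n {m\<in>X. n < m})"
    by (rule infinite_diagonal_subset[of Q, OF refine antimono assms(2)])
  then obtain X where X: "X \<subseteq> Y" "infinite X" "\<forall>n\<in>X. Q n {m\<in>X. n < m}"
    by auto
  have "nice_dissection C X (\<lambda>n. {x \<in> C n. \<forall>m\<in>X. n < m \<longrightarrow> x \<in> C m})
                            (\<lambda>n. {x \<in> C n. \<exists>m\<in>X. n < m \<and> x \<notin> C m})"
  proof (rule nice_dissection_if_eventually_constant)
    fix n x m m'
    assume "n \<in> X" "x \<in> C n" "m \<in> X" "m' \<in> X" "n < m" "n < m'"
    with X(3) show "x \<in> C m \<longleftrightarrow> x \<in> C m'" unfolding Q_def by blast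
  qed
  with X(1,2) show ?thesis by blast
qed

definition vietoris_basic :: "'a topology \<Rightarrow> 'a set set \<Rightarrow> 'a set set \<Rightarrow> 'a set set" where
  "vietoris_basic T AA BB = {F \<in> CL T. (\<forall>A\<in>AA. F \<subseteq> A) \<and> (\<forall>B\<in>BB. F \<inter> B \<noteq> {})}"

lemma topspace_vietoris: "topspace (vietoris T) = CL T"
proof -
  have "vupper T (topspace T) = CL T"
    unfolding vupper_def CL_def using closedin_subset by auto
  then show ?thesis
    unfolding vietoris_def topology_generated_by_topspace
    by (auto simp: vupper_def vlower_def)
qed

lemma openin_vietoris_basic:
  assumes "finite AA" "finite BB" "\<forall>A\<in>AA. openin T A" "\<forall>B\<in>BB. openin T B"
  shows "openin (vietoris T) (vietoris_basic T AA BB)"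
proof -
  have eq: "vietoris_basic T AA BB = \<Inter>(insert (CL T) (vupper T ` AA \<union> vlower T ` BB))"
  proof (intro equalityI subsetI)
    fix F assume "F \<in> \<Inter>(insert (CL T) (vupper T ` AA \<union> vlower T ` BB))"
    then have "F \<in> CL T" "\<forall>A\<in>AA. F \<in> vupper T A" "\<forall>B\<in>BB. F \<in> vlower T B"
      by blast+
    then show "F \<in> vietoris_basic T AA BB"
      by (simp add: vietoris_basic_def vupper_def vlower_def)
  qed (auto simp: vietoris_basic_def vupper_def vlower_def)
  have "openin (vietoris T) (CL T)"
    by (metis openin_topspace topspace_vietoris)
  moreover have "openin (vietoris T) (vupper T A)" "openin (vietoris T) (vlower T A)"
    if "openin T A" for A
    unfolding vietoris_def using that by (auto intro: topology_generated_by_Basis)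
  ultimately show ?thesis
    unfolding eq using assms by (intro openin_Inter) auto
qed

lemma vietoris_basic_neighbourhood:
  assumes "openin (vietoris T) W" "G \<in> W"
  obtains AA BB where "finite AA" "finite BB" "\<forall>A\<in>AA. openin T A" "\<forall>B\<in>BB. openin T B"
    "G \<in> vietoris_basic T AA BB" "vietoris_basic T AA BB \<subseteq> W"
proof -
  have "generate_topology_on ({vupper T A | A. openin T A} \<union> {vlower T A | A. openin T A}) W"
    using assms(1) unfolding vietoris_def by (rule openin_topology_generated_by)
  then have "\<exists>AA BB. finite AA \<and> finite BB \<and> (\<forall>A\<in>AA. openin T A) \<and> (\<forall>B\<in>BB. openin T B) \<and>
      G \<in> vietoris_basic T AA BB \<and> vietoris_basic T AA BB \<subseteq> W"
    using assms(2)
  proof (induction arbitrary: G)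
    case Empty
    then show ?case by simp
  next
    case (Int V V')
    then have "G \<in> V" "G \<in> V'" by auto
    obtain AA BB AA' BB' where
      "finite AA" "finite BB" "\<forall>A\<in>AA. openin T A" "\<forall>B\<in>BB. openin T B"
      "G \<in> vietoris_basic T AA BB" "vietoris_basic T AA BB \<subseteq> V"
      "finite AA'" "finite BB'" "\<forall>A\<in>AA'. openin T A" "\<forall>B\<in>BB'. openin T B"
      "G \<in> vietoris_basic T AA' BB'" "vietoris_basic T AA' BB' \<subseteq> V'"
      using Int.IH(1)[OF \<open>G \<in> V\<close>] Int.IH(2)[OF \<open>G \<in> V'\<close>] by (elim exE conjE) auto
    moreover have "vietoris_basic T (AA \<union> AA') (BB \<union> BB') =
        vietoris_basic T AA BB \<inter> vietoris_basic T AA' BB'"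
      unfolding vietoris_basic_def by blast
    ultimately show ?case
      by (intro exI[of _ "AA \<union> AA'"] exI[of _ "BB \<union> BB'"]) auto
  next
    case (UN \<V>)
    then obtain V where "V \<in> \<V>" "G \<in> V" by blast
    moreover have "V \<subseteq> \<Union>\<V>" using \<open>V \<in> \<V>\<close> by blast
    ultimately show ?case
      using UN.IH by (meson order_trans)
  next
    case (Basis V)
    then show ?case
    proof (elim UnE CollectE exE conjE)
      fix A assume "V = vupper T A" "openin T A"
      then show ?case using Basis.prems
        by (intro exI[of _ "{A}"] exI[of _ "{}"]) (auto simp: vietoris_basic_def vupper_def)
    next
      fix A assume "V = vlower T A" "openin T A"
      then show ?case using Basis.prems
        by (intro exI[of _ "{}"] exI[of _ "{A}"]) (auto simp: vietoris_basic_def vlower_def)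
    qed
  qed
  then show thesis by (elim exE conjE) (rule that)
qed

lemma seq_accumulation_point_iff_frequently:
  "seq_accumulation_point T s p \<longleftrightarrow>
     p \<in> topspace T \<and> (\<forall>W. openin T W \<and> p \<in> W \<longrightarrow> (\<exists>\<^sub>F n in sequentially. s n \<in> W))"
  by (simp add: seq_accumulation_point_def frequently_cofinite flip: cofinite_eq_sequentially)

lemma seq_accumulation_point_vietorisI:
  assumes "G \<in> CL T"
    and "\<And>AA BB. finite AA \<Longrightarrow> finite BB \<Longrightarrow> \<forall>A\<in>AA. openin T A \<Longrightarrow> \<forall>B\<in>BB. openin T B \<Longrightarrow>
           G \<in> vietoris_basic T AA BB \<Longrightarrow> \<exists>\<^sub>F n in sequentially. s n \<in> vietoris_basic T AA BB"
  shows "seq_accumulation_point (vietoris T) s G"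
  unfolding seq_accumulation_point_iff_frequently
proof (intro conjI allI impI)
  show "G \<in> topspace (vietoris T)"
    using assms(1) by (simp add: topspace_vietoris)
next
  fix W assume W: "openin (vietoris T) W \<and> G \<in> W"
  obtain AA BB where AB: "finite AA" "finite BB" "\<forall>A\<in>AA. openin T A" "\<forall>B\<in>BB. openin T B"
    "G \<in> vietoris_basic T AA BB" and sub: "vietoris_basic T AA BB \<subseteq> W"
    by (rule vietoris_basic_neighbourhood[OF W[THEN conjunct1] W[THEN conjunct2]])
  from AB have "\<exists>\<^sub>F n in sequentially. s n \<in> vietoris_basic T AA BB"
    by (rule assms(2))
  then show "\<exists>\<^sub>F n in sequentially. s n \<in> W"
    by (rule frequently_elim1) (use sub in blast)
qed

lemma seq_accumulation_point_subseq:
  assumes "strict_mono h" "seq_accumulation_point T (s \<circ> h) p"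
  shows "seq_accumulation_point T s p"
  unfolding seq_accumulation_point_def
proof (intro conjI allI impI)
  show "p \<in> topspace T"
    using assms(2) by (simp add: seq_accumulation_point_def)
next
  fix W assume "openin T W \<and> p \<in> W"
  then have "infinite {k. s (h k) \<in> W}"
    using assms(2) by (simp add: seq_accumulation_point_def)
  then have "infinite (h ` {k. s (h k) \<in> W})"
    using strict_mono_imp_inj_on[OF assms(1)] by (meson finite_imageD inj_on_subset subset_UNIV)
  moreover have "h ` {k. s (h k) \<in> W} \<subseteq> {n. s n \<in> W}" by auto
  ultimately show "infinite {n. s n \<in> W}"
    using finite_subset by blast
qed

lemma eventually_meets_mono_Union:
  fixes U :: "nat \<Rightarrow> 'a set"
  assumes "mono U" "B \<inter> \<Union>(range U) \<noteq> {}"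
  shows "\<forall>\<^sub>F n in sequentially. U n \<inter> B \<noteq> {}"
proof -
  obtain n0 x where "x \<in> U n0" "x \<in> B"
    using assms(2) by blast
  then show ?thesis
    unfolding eventually_sequentially using monoD[OF assms(1)] by blast
qed

text \<open>\<open>F\<close> stands for an accumulation point of \<open>s\<close>; \<open>F = {}\<close> together with \<open>s = (\<lambda>_. {})\<close> is allowed.\<close>

lemma seq_accumulation_point_vietoris_Un:
  fixes U s :: "nat \<Rightarrow> 'a set"
  assumes U: "mono U"
    and CL_Un: "\<And>k. U k \<union> s k \<in> CL T"
    and F: "closedin T F"
    and nonempty: "F \<union> T closure_of \<Union>(range U) \<noteq> {}"
    and s_frequently: "\<And>AA BB. finite AA \<Longrightarrow> finite BB \<Longrightarrow> \<forall>A\<in>AA. openin T A \<Longrightarrow>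
        \<forall>B\<in>BB. openin T B \<Longrightarrow> \<forall>A\<in>AA. F \<subseteq> A \<Longrightarrow> \<forall>B\<in>BB. F \<inter> B \<noteq> {} \<Longrightarrow>
        \<exists>\<^sub>F k in sequentially. (\<forall>A\<in>AA. s k \<subseteq> A) \<and> (\<forall>B\<in>BB. s k \<inter> B \<noteq> {})"
  shows "seq_accumulation_point (vietoris T) (\<lambda>k. U k \<union> s k) (F \<union> T closure_of \<Union>(range U))"
proof -
  define G where "G = F \<union> T closure_of \<Union>(range U)"
  have U_topspace: "\<Union>(range U) \<subseteq> topspace T"
    using CL_Un by (auto simp: CL_def dest: closedin_subset)
  have U_G: "U k \<subseteq> G" for k
    using closure_of_subset[OF U_topspace] unfolding G_def by blast
  have "G \<in> CL T"
    using F nonempty by (simp add: CL_def G_def closedin_Un)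
  then show ?thesis
    unfolding G_def[symmetric]
  proof (rule seq_accumulation_point_vietorisI)
    fix AA BB
    assume fin: "finite AA" "finite BB" and opens: "\<forall>A\<in>AA. openin T A" "\<forall>B\<in>BB. openin T B"
      and G_basic: "G \<in> vietoris_basic T AA BB"
    define BB\<^sub>F where "BB\<^sub>F = {B\<in>BB. F \<inter> B \<noteq> {}}"
    have "\<exists>\<^sub>F k in sequentially. (\<forall>A\<in>AA. s k \<subseteq> A) \<and> (\<forall>B\<in>BB\<^sub>F. s k \<inter> B \<noteq> {})"
      using fin opens G_basic
      by (intro s_frequently) (auto simp: BB\<^sub>F_def vietoris_basic_def G_def)
    moreover have "\<forall>\<^sub>F k in sequentially. U k \<inter> B \<noteq> {}" if B: "B \<in> BB - BB\<^sub>F" for B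
    proof -
      have "B \<inter> T closure_of \<Union>(range U) \<noteq> {}"
        using G_basic B by (auto simp: BB\<^sub>F_def vietoris_basic_def G_def)
      then have "B \<inter> \<Union>(range U) \<noteq> {}"
        using openin_Int_closure_of_eq_empty opens(2) B by blast
      then show ?thesis
        by (rule eventually_meets_mono_Union[OF U])
    qed
    then have "\<forall>\<^sub>F k in sequentially. \<forall>B\<in>BB - BB\<^sub>F. U k \<inter> B \<noteq> {}"
      using fin(2) by (intro eventually_ball_finite) auto
    ultimately have "\<exists>\<^sub>F k in sequentially. ((\<forall>A\<in>AA. s k \<subseteq> A) \<and> (\<forall>B\<in>BB\<^sub>F. s k \<inter> B \<noteq> {})) \<and>
        (\<forall>B\<in>BB - BB\<^sub>F. U k \<inter> B \<noteq> {})"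
      by (rule frequently_eventually_frequently)
    then show "\<exists>\<^sub>F k in sequentially. U k \<union> s k \<in> vietoris_basic T AA BB"
    proof (rule frequently_elim1)
      fix k
      assume "((\<forall>A\<in>AA. s k \<subseteq> A) \<and> (\<forall>B\<in>BB\<^sub>F. s k \<inter> B \<noteq> {})) \<and> (\<forall>B\<in>BB - BB\<^sub>F. U k \<inter> B \<noteq> {})"
      then have s_sub: "\<forall>A\<in>AA. s k \<subseteq> A" and s_meets: "\<forall>B\<in>BB\<^sub>F. s k \<inter> B \<noteq> {}"
        and U_meets: "\<forall>B\<in>BB - BB\<^sub>F. U k \<inter> B \<noteq> {}"
        by blast+
      have "(U k \<union> s k) \<inter> B \<noteq> {}" if "B \<in> BB" for B
        using that s_meets U_meets by (cases "B \<in> BB\<^sub>F") auto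
      moreover have "U k \<union> s k \<subseteq> A" if "A \<in> AA" for A
        using U_G G_basic that s_sub unfolding vietoris_basic_def by blast
      ultimately show "U k \<union> s k \<in> vietoris_basic T AA BB"
        using CL_Un[of k] by (auto simp: vietoris_basic_def)
    qed
  qed
qed

lemma seq_accumulation_point_vietoris_mono:
  fixes U :: "nat \<Rightarrow> 'a set"
  assumes "mono U" "\<And>k. U k \<in> CL T"
  shows "seq_accumulation_point (vietoris T) U (T closure_of \<Union>(range U))"
proof -
  have "U 0 \<subseteq> T closure_of \<Union>(range U)" "U 0 \<noteq> {}"
    using assms(2) closure_of_subset[of "\<Union>(range U)" T]
    by (auto simp: CL_def dest: closedin_subset)
  then have "seq_accumulation_point (vietoris T) (\<lambda>k. U k \<union> {}) ({} \<union> T closure_of \<Union>(range U))"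
    using assms by (intro seq_accumulation_point_vietoris_Un) auto
  then show ?thesis by simp
qed

lemma seq_accumulation_point_vietoris_Un_accumulation:
  fixes U s :: "nat \<Rightarrow> 'a set"
  assumes "mono U" "\<And>k. U k \<union> s k \<in> CL T" and F: "seq_accumulation_point (vietoris T) s F"
  shows "seq_accumulation_point (vietoris T) (\<lambda>k. U k \<union> s k) (F \<union> T closure_of \<Union>(range U))"
proof -
  have "F \<in> CL T"
    using F by (simp add: seq_accumulation_point_def topspace_vietoris)
  then have "closedin T F" "F \<noteq> {}"
    by (simp_all add: CL_def)
  moreover
  have "\<exists>\<^sub>F k in sequentially. (\<forall>A\<in>AA. s k \<subseteq> A) \<and> (\<forall>B\<in>BB. s k \<inter> B \<noteq> {})"
    if "finite AA" "finite BB" "\<forall>A\<in>AA. openin T A" "\<forall>B\<in>BB. openin T B"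
      "\<forall>A\<in>AA. F \<subseteq> A" "\<forall>B\<in>BB. F \<inter> B \<noteq> {}" for AA BB
  proof -
    have "openin (vietoris T) (vietoris_basic T AA BB)"
      using that by (simp add: openin_vietoris_basic)
    moreover have "F \<in> vietoris_basic T AA BB"
      using that \<open>F \<in> CL T\<close> by (simp add: vietoris_basic_def)
    ultimately have "\<exists>\<^sub>F k in sequentially. s k \<in> vietoris_basic T AA BB"
      using F by (simp add: seq_accumulation_point_iff_frequently)
    then show ?thesis
      by (rule frequently_elim1) (simp add: vietoris_basic_def)
  qed
  ultimately show ?thesis
    using assms(1,2) by (intro seq_accumulation_point_vietoris_Un) auto
qed

lemma finite_in_CL:
  assumes "t1_space T" "finite S" "S \<noteq> {}" "S \<subseteq> topspace T"
  shows "S \<in> CL T"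
  using assms t1_space_closedin_finite by (auto simp: CL_def)

lemma vietoris_basic_finite_witness:
  assumes T1: "t1_space T" and D: "D \<subseteq> topspace T"
    and dense: "\<And>W. openin T W \<Longrightarrow> W \<noteq> {} \<Longrightarrow> W \<inter> D \<noteq> {}"
    and fin: "finite AA" "finite BB" and opens: "\<forall>A\<in>AA. openin T A" "\<forall>B\<in>BB. openin T B"
    and Q: "Q \<in> vietoris_basic T AA BB"
  obtains E where "finite E" "E \<noteq> {}" "E \<subseteq> D" "E \<in> vietoris_basic T AA BB"
proof -
  define A\<^sub>0 where "A\<^sub>0 = \<Inter>(insert (topspace T) AA)"
  have "Q \<noteq> {}" "Q \<subseteq> A\<^sub>0" "\<forall>B\<in>BB. Q \<inter> B \<noteq> {}"
    using Q by (auto simp: vietoris_basic_def CL_def A\<^sub>0_def dest: closedin_subset)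
  have "openin T A\<^sub>0"
    unfolding A\<^sub>0_def using fin(1) opens(1) by (intro openin_Inter) auto
  have "\<exists>d. d \<in> D \<and> d \<in> A\<^sub>0 \<and> d \<in> B" if B: "B \<in> insert (topspace T) BB" for B
  proof -
    have "openin T (A\<^sub>0 \<inter> B)"
      using B opens(2) \<open>openin T A\<^sub>0\<close> by auto
    moreover have "A\<^sub>0 \<inter> B \<noteq> {}"
    proof (cases "B = topspace T")
      case True
      then show ?thesis
        using \<open>Q \<noteq> {}\<close> \<open>Q \<subseteq> A\<^sub>0\<close> unfolding A\<^sub>0_def by blast
    next
      case False
      then show ?thesis
        using B \<open>Q \<subseteq> A\<^sub>0\<close> \<open>\<forall>B\<in>BB. Q \<inter> B \<noteq> {}\<close> by blast
    qed
    ultimately show ?thesis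
      using dense by blast
  qed
  then obtain d where d: "\<And>B. B \<in> insert (topspace T) BB \<Longrightarrow> d B \<in> D \<and> d B \<in> A\<^sub>0 \<and> d B \<in> B"
    by metis
  define E where "E = d ` insert (topspace T) BB"
  have "finite E" "E \<noteq> {}" "E \<subseteq> D" "E \<subseteq> A\<^sub>0"
    using d fin(2) by (auto simp: E_def)
  moreover have "E \<inter> B \<noteq> {}" if "B \<in> BB" for B
    using d[of B] that by (auto simp: E_def)
  ultimately have "E \<in> vietoris_basic T AA BB"
    using finite_in_CL[OF T1] D by (auto simp: vietoris_basic_def A\<^sub>0_def)
  with \<open>finite E\<close> \<open>E \<noteq> {}\<close> \<open>E \<subseteq> D\<close> show thesis
    by (rule that)
qed

lemma finite_subsets_dense_in_vietoris:
  assumes "t1_space T" "D \<subseteq> topspace T"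
    and "\<And>W. openin T W \<Longrightarrow> W \<noteq> {} \<Longrightarrow> W \<inter> D \<noteq> {}"
    and "openin (vietoris T) W" "W \<noteq> {}"
  shows "\<exists>E\<in>W. finite E \<and> E \<noteq> {} \<and> E \<subseteq> D"
proof -
  obtain Q where "Q \<in> W"
    using assms(5) by blast
  with assms(4) obtain AA BB where AB: "finite AA" "finite BB" "\<forall>A\<in>AA. openin T A"
    "\<forall>B\<in>BB. openin T B" "Q \<in> vietoris_basic T AA BB" and sub: "vietoris_basic T AA BB \<subseteq> W"
    by (rule vietoris_basic_neighbourhood)
  obtain E where "finite E" "E \<noteq> {}" "E \<subseteq> D" "E \<in> vietoris_basic T AA BB"
    by (rule vietoris_basic_finite_witness[OF assms(1-3) AB])
  with sub show ?thesis by blast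
qed

lemma pseudocompactI_dense_accumulating:
  assumes dense: "\<And>W. openin T W \<Longrightarrow> W \<noteq> {} \<Longrightarrow> \<exists>x\<in>W. P x"
    and accumulating: "\<And>s. \<forall>n. P (s n) \<Longrightarrow> \<exists>p. seq_accumulation_point T s p"
  shows "pseudocompact T"
  unfolding pseudocompact_def
proof (intro allI impI)
  fix f assume f: "continuous_map T euclideanreal f"
  have ball_preimage: "openin T {x \<in> topspace T. f x \<in> ball c 1}" for c
  proof -
    have "openin euclideanreal (ball c 1)" by simp
    then show ?thesis using f unfolding continuous_map_def by blast
  qed
  show "bounded (f ` topspace T)"
  proof (rule ccontr)
    assume "\<not> bounded (f ` topspace T)"
    then have "\<exists>x\<in>topspace T. real k \<le> \<bar>f x\<bar>" for k
      unfolding bounded_real by (metis image_iff nle_le)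
    then obtain x where x: "\<And>k. x k \<in> topspace T" "\<And>k. real k \<le> \<bar>f (x k)\<bar>"
      by metis
    have "\<exists>y\<in>{y \<in> topspace T. f y \<in> ball (f (x k)) 1}. P y" for k
      using x(1)[of k] by (intro dense ball_preimage) auto
    then obtain s where s: "\<And>k. P (s k)" "\<And>k. s k \<in> topspace T" "\<And>k. \<bar>f (s k) - f (x k)\<bar> < 1"
      by (simp add: dist_real_def abs_minus_commute) metis
    then obtain p where p: "seq_accumulation_point T s p"
      using accumulating by blast
    then have "p \<in> {y \<in> topspace T. f y \<in> ball (f p) 1}"
      by (simp add: seq_accumulation_point_def)
    with p ball_preimage[of "f p"]
    have "\<exists>\<^sub>F k in sequentially. s k \<in> {y \<in> topspace T. f y \<in> ball (f p) 1}"
      unfolding seq_accumulation_point_iff_frequently by (meson mem_Collect_eq)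
    moreover obtain N :: nat where "\<bar>f p\<bar> + 2 < real N"
      using reals_Archimedean2 by blast
    then have "\<forall>\<^sub>F k in sequentially. \<bar>f p\<bar> + 2 < real k"
      by (intro eventually_sequentiallyI[of N]) linarith
    ultimately have "\<exists>\<^sub>F k in sequentially.
        s k \<in> {y \<in> topspace T. f y \<in> ball (f p) 1} \<and> \<bar>f p\<bar> + 2 < real k"
      by (rule frequently_eventually_frequently)
    then obtain k where "f (s k) \<in> ball (f p) 1" "\<bar>f p\<bar> + 2 < real k"
      by (auto dest: frequently_ex)
    with s(3)[of k] x(2)[of k] show False
      by (simp add: dist_real_def)
  qed
qed

lemma infinite_homogeneous_subseq:
  fixes N :: "nat set"
  assumes "infinite N"
  obtains h :: "nat \<Rightarrow> nat" where "strict_mono h" "range h \<subseteq> N" "(\<forall>k. P (h k)) \<or> (\<forall>k. \<not> P (h k))"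
proof -
  have "N = {n\<in>N. P n} \<union> {n\<in>N. \<not> P n}" by blast
  with assms consider "infinite {n\<in>N. P n}" | "infinite {n\<in>N. \<not> P n}"
    by (metis finite_UnI)
  then show thesis
  proof cases
    case 1
    then show thesis
      using enumerate_in_set[OF 1]
      by (intro that[of "enumerate {n\<in>N. P n}"]) (auto simp: strict_mono_enumerate range_enumerate)
  next
    case 2
    then show thesis
      using enumerate_in_set[OF 2]
      by (intro that[of "enumerate {n\<in>N. \<not> P n}"]) (auto simp: strict_mono_enumerate range_enumerate)
  qed
qed

lemma finite_subsets_seq_accumulation_point:
  assumes T1: "t1_space T" and D: "D \<subseteq> topspace T"
    and disjoint_accumulating: "\<And>s. \<forall>n. finite (s n) \<and> s n \<noteq> {} \<and> s n \<subseteq> D \<Longrightarrow>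
        \<forall>m n. m \<noteq> n \<longrightarrow> s m \<inter> s n = {} \<Longrightarrow> \<exists>F. seq_accumulation_point (vietoris T) s F"
    and E: "\<forall>n. finite (E n) \<and> E n \<noteq> {} \<and> E n \<subseteq> D"
  shows "\<exists>G. seq_accumulation_point (vietoris T) E G"
proof -
  obtain Y U V where "infinite Y" and dissection: "nice_dissection E Y U V"
    using exists_nice_dissection[of E UNIV] E by auto
  then have U_mono: "\<And>n m. n \<in> Y \<Longrightarrow> m \<in> Y \<Longrightarrow> n < m \<Longrightarrow> U n \<subseteq> U m"
    and V_disjoint: "\<And>n m. n \<in> Y \<Longrightarrow> m \<in> Y \<Longrightarrow> n \<noteq> m \<Longrightarrow> V n \<inter> V m = {}"
    and E_Un: "\<And>n. n \<in> Y \<Longrightarrow> E n = U n \<union> V n"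
    unfolding nice_dissection_def by blast+
  obtain h :: "nat \<Rightarrow> nat" where h: "strict_mono h" "range h \<subseteq> Y"
    and homogeneous: "(\<forall>k. V (h k) = {}) \<or> (\<forall>k. V (h k) \<noteq> {})"
    by (rule infinite_homogeneous_subseq[OF \<open>infinite Y\<close>, where P = "\<lambda>n. V n = {}"])
  then have h_Y: "h k \<in> Y" for k
    by blast
  have "mono (U \<circ> h)"
  proof (rule monoI)
    fix k j :: nat assume "k \<le> j"
    then have "h k \<le> h j"
      using h(1) by (simp add: strict_mono_less_eq)
    then show "(U \<circ> h) k \<subseteq> (U \<circ> h) j"
      using U_mono h_Y by (cases "h k = h j") auto
  qed
  have E_h: "E \<circ> h = (\<lambda>k. (U \<circ> h) k \<union> (V \<circ> h) k)"
    using E_Un h_Y by (simp add: fun_eq_iff)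
  have CL_h: "(U \<circ> h) k \<union> (V \<circ> h) k \<in> CL T" for k
  proof -
    have "E (h k) \<in> CL T"
      using E D by (intro finite_in_CL[OF T1]) auto
    then show ?thesis
      using E_Un h_Y by simp
  qed
  from homogeneous have "\<exists>G. seq_accumulation_point (vietoris T) (E \<circ> h) G"
  proof
    assume V_empty: "\<forall>k. V (h k) = {}"
    then have "E \<circ> h = U \<circ> h"
      using E_h by (simp add: fun_eq_iff)
    moreover have "(U \<circ> h) k \<in> CL T" for k
      using CL_h[of k] V_empty by simp
    then have "seq_accumulation_point (vietoris T) (U \<circ> h) (T closure_of \<Union>(range (U \<circ> h)))"
      by (rule seq_accumulation_point_vietoris_mono[OF \<open>mono (U \<circ> h)\<close>])
    ultimately show ?thesis
      by auto
  next
    assume nonempty: "\<forall>k. V (h k) \<noteq> {}"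
    have "V (h n) \<subseteq> E (h n)" for n
      by (simp add: E_Un h_Y)
    then have "\<forall>n. finite ((V \<circ> h) n) \<and> (V \<circ> h) n \<noteq> {} \<and> (V \<circ> h) n \<subseteq> D"
      using E nonempty by (auto intro: finite_subset)
    moreover have "\<forall>m n. m \<noteq> n \<longrightarrow> (V \<circ> h) m \<inter> (V \<circ> h) n = {}"
      using V_disjoint h_Y strict_mono_eq[OF h(1)] by simp
    ultimately have "\<exists>F. seq_accumulation_point (vietoris T) (V \<circ> h) F"
      by (rule disjoint_accumulating)
    then obtain F where "seq_accumulation_point (vietoris T) (V \<circ> h) F" ..
    then have "seq_accumulation_point (vietoris T) (E \<circ> h) (F \<union> T closure_of \<Union>(range (U \<circ> h)))"
      unfolding E_h by (rule seq_accumulation_point_vietoris_Un_accumulation[OF \<open>mono (U \<circ> h)\<close> CL_h])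
    then show ?thesis ..
  qed
  then obtain G where "seq_accumulation_point (vietoris T) (E \<circ> h) G" ..
  then have "seq_accumulation_point (vietoris T) E G"
    by (rule seq_accumulation_point_subseq[OF h(1)])
  then show ?thesis ..
qed

lemma dense_in_subtopology:
  assumes "K closure_of D = topspace K" "D \<subseteq> X"
    and "openin (subtopology K X) W" "W \<noteq> {}"
  shows "W \<inter> D \<noteq> {}"
proof -
  obtain W' where W': "openin K W'" "W = W' \<inter> X"
    using assms(3) by (auto simp: openin_subtopology)
  obtain x where "x \<in> W" using assms(4) by blast
  then have "x \<in> K closure_of D"
    using assms(1) W' openin_subset by fastforce
  then obtain y where "y \<in> D" "y \<in> W'"
    using \<open>x \<in> W\<close> W' unfolding in_closure_of by blast
  then show ?thesis
    using W' assms(2) by blast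
qed

lemma pseudocompact_vietoris_if_disjoint_finite_accumulating:
  assumes "Hausdorff_space K" "K closure_of D = topspace K" "D \<subseteq> X" "X \<subseteq> topspace K"
    and accumulating: "\<And>s. \<forall>n. finite (s n) \<and> s n \<noteq> {} \<and> s n \<subseteq> D \<Longrightarrow>
       \<forall>m n. m \<noteq> n \<longrightarrow> s m \<inter> s n = {} \<Longrightarrow>
       \<exists>F. seq_accumulation_point (vietoris (subtopology K X)) s F"
  shows "pseudocompact (vietoris (subtopology K X))"
proof -
  have T1: "t1_space (subtopology K X)"
    using assms(1) by (simp add: Hausdorff_imp_t1_space Hausdorff_space_subtopology)
  have D: "D \<subseteq> topspace (subtopology K X)"
    using assms(3,4) by simp
  have dense: "W \<inter> D \<noteq> {}" if "openin (subtopology K X) W" "W \<noteq> {}" for W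
    using assms(2,3) that by (rule dense_in_subtopology)
  show ?thesis
  proof (rule pseudocompactI_dense_accumulating[where P = "\<lambda>E. finite E \<and> E \<noteq> {} \<and> E \<subseteq> D"])
    show "\<exists>E\<in>W. finite E \<and> E \<noteq> {} \<and> E \<subseteq> D"
      if "openin (vietoris (subtopology K X)) W" "W \<noteq> {}" for W
      using finite_subsets_dense_in_vietoris[OF T1 D dense that] by blast
    show "\<exists>G. seq_accumulation_point (vietoris (subtopology K X)) s G"
      if "\<forall>n. finite (s n) \<and> s n \<noteq> {} \<and> s n \<subseteq> D" for s
      using finite_subsets_seq_accumulation_point[OF T1 D accumulating that] .
  qed
qed

theorem lemma4p4:
  shows "(\<forall>(C :: nat \<Rightarrow> 'b set) (Y :: nat set).
            (\<forall>n. finite (C n)) \<and> infinite Y \<longrightarrow>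
            (\<exists>X. X \<subseteq> Y \<and> infinite X \<and> (\<exists>U D. nice_dissection C X U D)))
       \<and> (\<forall>(K :: 'a topology) (D :: 'a set) (X :: 'a set).
            compactification_of_discrete K D \<and> D \<subseteq> X \<and> X \<subseteq> topspace K \<and>
            (\<forall>s :: nat \<Rightarrow> 'a set.
                (\<forall>n. finite (s n) \<and> s n \<noteq> {} \<and> s n \<subseteq> D) \<and>
                (\<forall>m n. m \<noteq> n \<longrightarrow> s m \<inter> s n = {}) \<longrightarrow>
                (\<exists>F. seq_accumulation_point (vietoris (subtopology K X)) s F))
            \<longrightarrow> pseudocompact (vietoris (subtopology K X)))"
  by (intro conjI allI impI exists_nice_dissection pseudocompact_vietoris_if_disjoint_finite_accumulating)
    (auto simp: compactification_of_discrete_def)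

end
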